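(* Let $G$ be a grid-labelled graph of type $(3,3)$ with exactly $4$ edges, all diagonal. Then $G$ satisfies the degree criterion if and only if either $G$ is locally isomorphic to the cross-hatch $B_4$, or $E(G)$ is the disjoint union of two criss-crosses, i.e. of two edge sets of the form $\{\{(i,j),(k,l)\},\{(i,l),(k,j)\}\}$ with $i\neq k$, $j\neq l$.
   Context: A grid-labelled graph of type $(a,b)$ is a simple graph whose vertex set is the grid $[a]\times[b]$. An edge $\{(i,j),(k,l)\}$ is diagonal if $i\neq k$ and $j\neq l$. The partial transpose $\Gamma(G)$ is the grid-labelled graph with edge set $\{\{(k,j),(i,l)\}:\{(i,j),(k,l)\}\in E(G)\}$; $G$ satisfies the degree criterion if every vertex has the same degree in $G$ and in $\Gamma(G)$. Two grid-labelled graphs $G,H$ of type $(a,b)$ are locally isomorphic if there are permutations $\pi$ of $[a]$ and $\sigma$ of $[b]$ with $\{(i,j),(k,l)\}\in E(G)\iff\{(\pi(i),\sigma(j)),(\pi(k),\sigma(l))\}\in E(H)$. The cross-hatch $B_4$ is the type $(3,3)$ graph with edges $\{(1,1),(2,3)\},\{(2,1),(3,3)\},\{(1,2),(3,1)\},\{(1,3),(3,2)\}$. *)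

theory Defs
  imports Main "HOL-Combinatorics.Permutations"
begin

type_synonym vtx = "nat \<times> nat"
type_synonym edges = "vtx set set"

definition grid :: "nat \<Rightarrow> nat \<Rightarrow> vtx set" where
  "grid a b = {1..a} \<times> {1..b}"

definition grid_graph :: "nat \<Rightarrow> nat \<Rightarrow> edges \<Rightarrow> bool" where
  "grid_graph a b E \<longleftrightarrow>
     E \<subseteq> {{u, v} | u v. u \<in> grid a b \<and> v \<in> grid a b \<and> u \<noteq> v}"

definition diagonal :: "vtx set \<Rightarrow> bool" where
  "diagonal e \<longleftrightarrow> (\<exists>i j k l. e = {(i, j), (k, l)} \<and> i \<noteq> k \<and> j \<noteq> l)"

definition partial_transpose :: "edges \<Rightarrow> edges" where
  "partial_transpose E = {{(k, j), (i, l)} | i j k l. {(i, j), (k, l)} \<in> E}"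

definition deg :: "edges \<Rightarrow> vtx \<Rightarrow> nat" where
  "deg E v = card {e \<in> E. v \<in> e}"

definition degree_criterion :: "nat \<Rightarrow> nat \<Rightarrow> edges \<Rightarrow> bool" where
  "degree_criterion a b E \<longleftrightarrow>
     (\<forall>v \<in> grid a b. deg E v = deg (partial_transpose E) v)"

definition locally_isomorphic :: "nat \<Rightarrow> nat \<Rightarrow> edges \<Rightarrow> edges \<Rightarrow> bool" where
  "locally_isomorphic a b G H \<longleftrightarrow>
     (\<exists>\<pi> \<sigma>. \<pi> permutes {1..a} \<and> \<sigma> permutes {1..b} \<and>
        (\<forall>i j k l. {(i, j), (k, l)} \<in> G \<longleftrightarrow>
                   {(\<pi> i, \<sigma> j), (\<pi> k, \<sigma> l)} \<in> H))"

definition cross_hatch_B4 :: edges where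
  "cross_hatch_B4 = {{(1,1),(2,3)}, {(2,1),(3,3)}, {(1,2),(3,1)}, {(1,3),(3,2)}}"

definition criss_cross :: "nat \<Rightarrow> nat \<Rightarrow> nat \<Rightarrow> nat \<Rightarrow> edges" where
  "criss_cross i j k l = {{(i, j), (k, l)}, {(i, l), (k, j)}}"

definition is_criss_cross :: "edges \<Rightarrow> bool" where
  "is_criss_cross C \<longleftrightarrow> (\<exists>i j k l. i \<noteq> k \<and> j \<noteq> l \<and> C = criss_cross i j k l)"

end

theory Submission
  imports Defs
begin

text \<open>
  The partial transpose commutes with relabelling rows and columns, so the degree criterion is
  invariant under local isomorphism and holds for every copy of \<open>B\<^sub>4\<close>; a criss-cross is
  fixed by the partial transpose, so disjoint unions of two criss-crosses satisfy it as well.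

  Conversely, a diagonal edge of the \<open>3 \<times> 3\<close> grid is a quadruple \<open>(i, j, k, l)\<close> with
  \<open>i < k\<close> and \<open>j \<noteq> l\<close>, and the criterion says that the signed incidence vectors
  \<open>v \<mapsto> [v \<in> e] - [v \<in> \<Gamma> e]\<close> of the four edges sum to zero. All coordinates of such a sum
  lie in \<open>[-4, 4]\<close>, so encoding the vectors in base 9 turns the criterion into the vanishing of a
  sum of four integers. An exhaustive search over the 4-subsets of the 18 diagonal edges then
  shows that every balanced one is either closed under \<open>\<Gamma>\<close>, and hence splits into two
  criss-crosses, or contains, and hence equals, a relabelled copy of \<open>B\<^sub>4\<close>.
\<close>

section \<open>Partial transpose, relabelling and local isomorphism\<close>

lemma partial_transpose_empty [simp]: "partial_transpose {} = {}"
  by (simp add: partial_transpose_def)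

lemma partial_transpose_insert [simp]:
  "partial_transpose (insert {(i, j), (k, l)} E) = insert {(k, j), (i, l)} (partial_transpose E)"
  unfolding partial_transpose_def by (auto simp: doubleton_eq_iff)

lemma partial_transpose_Un: "partial_transpose (A \<union> B) = partial_transpose A \<union> partial_transpose B"
  unfolding partial_transpose_def by blast

lemma partial_transpose_criss_cross [simp]:
  "partial_transpose (criss_cross i j k l) = criss_cross i j k l"
  by (auto simp: criss_cross_def)

lemma degree_criterion_cross_hatch_B4: "degree_criterion 3 3 cross_hatch_B4"
  unfolding degree_criterion_def cross_hatch_B4_def partial_transpose_insert partial_transpose_empty
  by code_simp

definition relabel :: "(nat \<Rightarrow> nat) \<Rightarrow> (nat \<Rightarrow> nat) \<Rightarrow> edges \<Rightarrow> edges" where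
  "relabel \<pi> \<sigma> E = image (map_prod \<pi> \<sigma>) ` E"

lemma inj_image_map_prod: "inj \<pi> \<Longrightarrow> inj \<sigma> \<Longrightarrow> inj (image (map_prod \<pi> \<sigma>))"
  by (metis injI inj_image_eq_iff map_prod_inj_on UNIV_Times_UNIV)

lemma relabel_inv:
  assumes "bij \<pi>" "bij \<sigma>"
  shows "relabel (inv \<pi>) (inv \<sigma>) (relabel \<pi> \<sigma> E) = E"
proof -
  have "map_prod (inv \<pi>) (inv \<sigma>) \<circ> map_prod \<pi> \<sigma> = id"
    using assms by (simp add: map_prod.comp bij_is_inj prod.map_id0)
  then show ?thesis
    by (simp add: relabel_def image_comp flip: image_comp[of "map_prod (inv \<pi>) (inv \<sigma>)"])
qed

lemma locally_isomorphic_relabel: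
  assumes "\<pi> permutes {1..a}" "\<sigma> permutes {1..b}"
  shows "locally_isomorphic a b G (relabel \<pi> \<sigma> G)"
proof -
  have "inj (image (map_prod \<pi> \<sigma>))"
    using assms by (simp add: inj_image_map_prod permutes_inj)
  then have "{(i, j), (k, l)} \<in> G \<longleftrightarrow> image (map_prod \<pi> \<sigma>) {(i, j), (k, l)} \<in> relabel \<pi> \<sigma> G"
    for i j k l
    unfolding relabel_def by (rule inj_image_mem_iff[symmetric])
  then have "{(i, j), (k, l)} \<in> G \<longleftrightarrow> {(\<pi> i, \<sigma> j), (\<pi> k, \<sigma> l)} \<in> relabel \<pi> \<sigma> G"
    for i j k l
    by simp
  with assms show ?thesis
    unfolding locally_isomorphic_def by blast
qed

lemma relabel_if_locally_isomorphic:
  assumes "locally_isomorphic a b G H" and "\<forall>e \<in> G \<union> H. \<exists>u v. e = {u, v}"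
  obtains \<pi> \<sigma> where "\<pi> permutes {1..a}" "\<sigma> permutes {1..b}" "H = relabel \<pi> \<sigma> G"
proof -
  obtain \<pi> \<sigma> where \<pi>: "\<pi> permutes {1..a}" and \<sigma>: "\<sigma> permutes {1..b}"
    and iso: "\<And>i j k l. {(i, j), (k, l)} \<in> G \<longleftrightarrow> {(\<pi> i, \<sigma> j), (\<pi> k, \<sigma> l)} \<in> H"
    using assms(1) unfolding locally_isomorphic_def by blast
  have "H = relabel \<pi> \<sigma> G"
  proof
    show "H \<subseteq> relabel \<pi> \<sigma> G"
    proof
      fix e assume "e \<in> H"
      then obtain i j k l where e: "e = {(i, j), (k, l)}"
        using assms(2) by fastforce
      let ?e' = "{(inv \<pi> i, inv \<sigma> j), (inv \<pi> k, inv \<sigma> l)}"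
      have "e = image (map_prod \<pi> \<sigma>) ?e'"
        by (simp add: e permutes_inverses(1)[OF \<pi>] permutes_inverses(1)[OF \<sigma>])
      moreover have "?e' \<in> G"
        using iso \<open>e \<in> H\<close> by (simp add: e permutes_inverses(1)[OF \<pi>] permutes_inverses(1)[OF \<sigma>])
      ultimately show "e \<in> relabel \<pi> \<sigma> G" unfolding relabel_def by blast
    qed
  next
    show "relabel \<pi> \<sigma> G \<subseteq> H"
    proof
      fix f assume "f \<in> relabel \<pi> \<sigma> G"
      then obtain e where "e \<in> G" "f = image (map_prod \<pi> \<sigma>) e" unfolding relabel_def by blast
      moreover obtain i j k l where "e = {(i, j), (k, l)}"
        using assms(2) \<open>e \<in> G\<close> by fastforce
      ultimately show "f \<in> H" using iso by simp
    qed
  qed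
  with \<pi> \<sigma> show ?thesis by (rule that)
qed

lemma partial_transpose_relabel:
  assumes "bij \<pi>" "bij \<sigma>"
  shows "partial_transpose (relabel \<pi> \<sigma> E) = relabel \<pi> \<sigma> (partial_transpose E)"
proof
  show "partial_transpose (relabel \<pi> \<sigma> E) \<subseteq> relabel \<pi> \<sigma> (partial_transpose E)"
  proof
    fix f assume "f \<in> partial_transpose (relabel \<pi> \<sigma> E)"
    then obtain i j k l where f: "f = {(k, j), (i, l)}"
      and "{(i, j), (k, l)} \<in> relabel \<pi> \<sigma> E"
      unfolding partial_transpose_def by blast
    then have "image (map_prod (inv \<pi>) (inv \<sigma>)) {(i, j), (k, l)} \<in> relabel (inv \<pi>) (inv \<sigma>) (relabel \<pi> \<sigma> E)"
      unfolding relabel_def by blast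
    then have "{(inv \<pi> i, inv \<sigma> j), (inv \<pi> k, inv \<sigma> l)} \<in> E"
      by (simp add: relabel_inv[OF assms])
    then have "{(inv \<pi> k, inv \<sigma> j), (inv \<pi> i, inv \<sigma> l)} \<in> partial_transpose E"
      unfolding partial_transpose_def by blast
    moreover have "f = image (map_prod \<pi> \<sigma>) {(inv \<pi> k, inv \<sigma> j), (inv \<pi> i, inv \<sigma> l)}"
      using assms by (simp add: f bij_is_surj surj_f_inv_f)
    ultimately show "f \<in> relabel \<pi> \<sigma> (partial_transpose E)"
      unfolding relabel_def by blast
  qed
next
  show "relabel \<pi> \<sigma> (partial_transpose E) \<subseteq> partial_transpose (relabel \<pi> \<sigma> E)"
  proof
    fix f assume "f \<in> relabel \<pi> \<sigma> (partial_transpose E)"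
    then obtain i j k l where ijkl: "{(i, j), (k, l)} \<in> E"
      and f: "f = image (map_prod \<pi> \<sigma>) {(k, j), (i, l)}"
      unfolding relabel_def partial_transpose_def by blast
    from ijkl have "image (map_prod \<pi> \<sigma>) {(i, j), (k, l)} \<in> relabel \<pi> \<sigma> E"
      unfolding relabel_def by blast
    then have "{(\<pi> i, \<sigma> j), (\<pi> k, \<sigma> l)} \<in> relabel \<pi> \<sigma> E"
      by simp
    moreover have "f = {(\<pi> k, \<sigma> j), (\<pi> i, \<sigma> l)}"
      by (simp add: f)
    ultimately show "f \<in> partial_transpose (relabel \<pi> \<sigma> E)"
      unfolding partial_transpose_def by blast
  qed
qed

lemma deg_relabel:
  assumes "inj \<pi>" "inj \<sigma>"
  shows "deg (relabel \<pi> \<sigma> E) (\<pi> i, \<sigma> j) = deg E (i, j)"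
proof -
  have inj: "inj (image (map_prod \<pi> \<sigma>))"
    using assms by (rule inj_image_map_prod)
  have mem_iff: "(\<pi> i, \<sigma> j) \<in> image (map_prod \<pi> \<sigma>) e \<longleftrightarrow> (i, j) \<in> e" for e
    using assms by (auto simp: inj_eq)
  have "{f \<in> relabel \<pi> \<sigma> E. (\<pi> i, \<sigma> j) \<in> f} = image (map_prod \<pi> \<sigma>) ` {e \<in> E. (i, j) \<in> e}"
    unfolding relabel_def mem_iff[symmetric] by (rule Compr_image_eq)
  then show ?thesis
    unfolding deg_def using inj by (simp add: card_image inj_on_subset)
qed

lemma degree_criterion_relabel:
  assumes "\<pi> permutes {1..a}" "\<sigma> permutes {1..b}"
  shows "degree_criterion a b (relabel \<pi> \<sigma> E) \<longleftrightarrow> degree_criterion a b E"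
proof -
  have bij: "bij \<pi>" "bij \<sigma>" and inj: "inj \<pi>" "inj \<sigma>"
    using assms by (simp_all add: permutes_bij permutes_inj)
  have grid: "grid a b = map_prod \<pi> \<sigma> ` grid a b"
    using assms by (simp add: grid_def map_prod_surj_on permutes_image)
  have ball_grid: "(\<forall>v \<in> grid a b. P v) \<longleftrightarrow> (\<forall>(i, j) \<in> grid a b. P (\<pi> i, \<sigma> j))" for P
    by (subst (1) grid) blast
  have "degree_criterion a b (relabel \<pi> \<sigma> E) \<longleftrightarrow>
        (\<forall>(i, j) \<in> grid a b. deg (relabel \<pi> \<sigma> E) (\<pi> i, \<sigma> j) =
                              deg (relabel \<pi> \<sigma> (partial_transpose E)) (\<pi> i, \<sigma> j))"
    unfolding degree_criterion_def partial_transpose_relabel[OF bij] by (rule ball_grid)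
  also have "\<dots> \<longleftrightarrow> degree_criterion a b E"
    unfolding degree_criterion_def deg_relabel[OF inj] by (simp add: case_prod_unfold)
  finally show ?thesis .
qed

section \<open>Diagonal edges as quadruples\<close>

type_synonym quad = "nat \<times> nat \<times> nat \<times> nat"

fun edge :: "quad \<Rightarrow> vtx set" where
  "edge (i, j, k, l) = {(i, j), (k, l)}"

fun transpose_quad :: "quad \<Rightarrow> quad" where
  "transpose_quad (i, j, k, l) = (i, l, k, j)"

definition diag_quads :: "nat \<Rightarrow> nat \<Rightarrow> quad list" where
  "diag_quads a b = filter (\<lambda>(i, j, k, l). i < k \<and> j \<noteq> l)
     (List.product [1..<a+1] (List.product [1..<b+1] (List.product [1..<a+1] [1..<b+1])))"

lemma mem_diag_quads:
  "(i, j, k, l) \<in> set (diag_quads a b) \<longleftrightarrow>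
     (i, j) \<in> grid a b \<and> (k, l) \<in> grid a b \<and> i < k \<and> j \<noteq> l"
  by (auto simp: diag_quads_def grid_def)

lemma partial_transpose_edge_image:
  "finite T \<Longrightarrow> partial_transpose (edge ` T) = edge ` transpose_quad ` T"
proof (induction rule: finite_induct)
  case (insert q T)
  then show ?case by (cases q) (simp add: insert_commute)
qed simp

lemma inj_on_edge_diag_quads: "inj_on edge (set (diag_quads a b))"
proof (rule inj_onI)
  fix q q' assume "q \<in> set (diag_quads a b)" "q' \<in> set (diag_quads a b)" "edge q = edge q'"
  then show "q = q'"
    by (cases q rule: prod_cases4; cases q' rule: prod_cases4) (auto simp: mem_diag_quads doubleton_eq_iff)
qed

lemma transpose_quad_diag_quads:
  "q \<in> set (diag_quads a b) \<Longrightarrow> transpose_quad q \<in> set (diag_quads a b)"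
  by (cases q) (auto simp: mem_diag_quads grid_def)

lemma transpose_quad_neq: "q \<in> set (diag_quads a b) \<Longrightarrow> transpose_quad q \<noteq> q"
  by (cases q) (auto simp: mem_diag_quads)

lemma transpose_quad_transpose_quad [simp]: "transpose_quad (transpose_quad q) = q"
  by (cases q) simp

lemma diagonal_edges_subset:
  assumes "grid_graph a b E" "\<forall>e \<in> E. diagonal e"
  shows "E \<subseteq> edge ` set (diag_quads a b)"
proof
  fix e assume "e \<in> E"
  with assms(2) have "diagonal e" by blast
  then obtain i j k l where e: "e = {(i, j), (k, l)}" "i \<noteq> k" "j \<noteq> l"
    unfolding diagonal_def by (elim exE conjE) (rule that)
  obtain u v where "{(i, j), (k, l)} = {u, v}" "u \<in> grid a b" "v \<in> grid a b"
    using assms(1) \<open>e \<in> E\<close> unfolding grid_graph_def e by blast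
  then have ij: "(i, j) \<in> grid a b" and kl: "(k, l) \<in> grid a b"
    by (auto simp: doubleton_eq_iff)
  show "e \<in> edge ` set (diag_quads a b)"
  proof (cases "i < k")
    case True
    with ij kl e have "(i, j, k, l) \<in> set (diag_quads a b)"
      by (simp add: mem_diag_quads)
    with e show ?thesis by force
  next
    case False
    with ij kl e have "(k, l, i, j) \<in> set (diag_quads a b)"
      by (simp add: mem_diag_quads)
    moreover have "e = edge (k, l, i, j)"
      by (simp add: e insert_commute)
    ultimately show ?thesis by blast
  qed
qed

lemma deg_edge_image:
  assumes "inj_on edge T"
  shows "deg (edge ` T) v = card {q \<in> T. v \<in> edge q}"
  unfolding deg_def Compr_image_eq using assms by (simp add: card_image inj_on_subset)

lemma deg_partial_transpose_edge_image:
  assumes "T \<subseteq> set (diag_quads a b)"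
  shows "deg (partial_transpose (edge ` T)) v = card {q \<in> T. v \<in> edge (transpose_quad q)}"
proof -
  have "transpose_quad ` T \<subseteq> set (diag_quads a b)"
    using assms transpose_quad_diag_quads by blast
  then have "deg (edge ` transpose_quad ` T) v = card {q \<in> transpose_quad ` T. v \<in> edge q}"
    by (intro deg_edge_image inj_on_subset[OF inj_on_edge_diag_quads])
  also have "\<dots> = card {q \<in> T. v \<in> edge (transpose_quad q)}"
    unfolding Compr_image_eq by (rule card_image, rule inj_on_inverseI[where g = transpose_quad]) simp
  finally show ?thesis
    using finite_subset[OF assms finite_set] by (simp add: partial_transpose_edge_image)
qed

fun base9 :: "int list \<Rightarrow> int" where
  "base9 [] = 0"
| "base9 (c # cs) = c + 9 * base9 cs"

lemma base9_eq_0_iff: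
  "\<forall>c \<in> set cs. \<bar>c\<bar> \<le> 4 \<Longrightarrow> base9 cs = 0 \<longleftrightarrow> (\<forall>c \<in> set cs. c = 0)"
proof (induction cs)
  case (Cons c cs)
  have "base9 (c # cs) = 0 \<longleftrightarrow> c = 0 \<and> base9 cs = 0"
  proof
    assume "base9 (c # cs) = 0"
    then have "c = - 9 * base9 cs" by simp
    moreover have "\<bar>c\<bar> \<le> 4" using Cons.prems by simp
    ultimately have "base9 cs = 0" by linarith
    with \<open>c = - 9 * base9 cs\<close> show "c = 0 \<and> base9 cs = 0" by simp
  qed simp
  with Cons show ?case by simp
qed simp

lemma base9_sum_list:
  "base9 (map (\<lambda>v. \<Sum>q\<leftarrow>ys. f v q) vs) = (\<Sum>q\<leftarrow>ys. base9 (map (\<lambda>v. f v q) vs))"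
  by (induction vs) (simp_all add: sum_list_addf sum_list_const_mult)

definition signed_incidence :: "vtx \<Rightarrow> quad \<Rightarrow> int" where
  "signed_incidence v q = of_bool (v \<in> edge q) - of_bool (v \<in> edge (transpose_quad q))"

lemma sum_signed_incidence:
  "(\<Sum>q\<leftarrow>ys. signed_incidence v q) =
     int (length (filter (\<lambda>q. v \<in> edge q) ys)) - int (length (filter (\<lambda>q. v \<in> edge (transpose_quad q)) ys))"
  by (induction ys) (auto simp: signed_incidence_def)

definition grid_list :: "nat \<Rightarrow> nat \<Rightarrow> vtx list" where
  "grid_list a b = List.product [1..<a+1] [1..<b+1]"

lemma set_grid_list: "set (grid_list a b) = grid a b"
  by (auto simp: grid_list_def grid_def)

definition incidence_code :: "quad \<Rightarrow> int" where
  "incidence_code q = base9 (map (\<lambda>v. signed_incidence v q) (grid_list 3 3))"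

lemma degree_criterion_iff_incidence_code_sum:
  assumes "distinct ys" "length ys \<le> 4" "set ys \<subseteq> set (diag_quads 3 3)"
  shows "degree_criterion 3 3 (edge ` set ys) \<longleftrightarrow> (\<Sum>q\<leftarrow>ys. incidence_code q) = 0"
proof -
  define c where "c v = (\<Sum>q\<leftarrow>ys. signed_incidence v q)" for v
  have len: "length (filter P ys) = card {q \<in> set ys. P q}" for P
    using assms(1) by (simp add: distinct_length_filter Int_def conj_commute)
  have deg_diff: "int (deg (edge ` set ys) v) - int (deg (partial_transpose (edge ` set ys)) v) = c v" for v
    using assms(3)
    by (simp add: c_def sum_signed_incidence deg_edge_image deg_partial_transpose_edge_image
        inj_on_subset[OF inj_on_edge_diag_quads] len)
  have "\<bar>c v\<bar> \<le> 4" for v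
    using length_filter_le[of "\<lambda>q. v \<in> edge q" ys] length_filter_le[of "\<lambda>q. v \<in> edge (transpose_quad q)" ys]
      assms(2)
    unfolding c_def sum_signed_incidence by linarith
  then have "(\<Sum>q\<leftarrow>ys. incidence_code q) = 0 \<longleftrightarrow> (\<forall>v \<in> grid 3 3. c v = 0)"
    unfolding incidence_code_def c_def base9_sum_list[symmetric] by (simp add: base9_eq_0_iff set_grid_list)
  moreover have "deg (edge ` set ys) v = deg (partial_transpose (edge ` set ys)) v \<longleftrightarrow> c v = 0" for v
    using deg_diff[of v] by linarith
  ultimately show ?thesis
    unfolding degree_criterion_def by simp
qed

section \<open>Exhaustive search over quadruples of diagonal edges\<close>

fun subsets :: "nat \<Rightarrow> 'a list \<Rightarrow> 'a list list" where
  "subsets 0 xs = [[]]"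
| "subsets (Suc k) [] = []"
| "subsets (Suc k) (x # xs) = map ((#) x) (subsets k xs) @ subsets (Suc k) xs"

lemma length_subsets: "ys \<in> set (subsets k xs) \<Longrightarrow> length ys = k"
  by (induction k xs arbitrary: ys rule: subsets.induct) auto

lemma subsets_map: "subsets k (map f xs) = map (map f) (subsets k xs)"
  by (induction k xs rule: subsets.induct) auto

lemma subsets_Cons_mono: "set (subsets k xs) \<subseteq> set (subsets k (x # xs))"
  by (cases k) auto

lemma subsets_exhaust: "T \<subseteq> set xs \<Longrightarrow> \<exists>ys \<in> set (subsets (card T) xs). set ys = T"
proof (induction xs arbitrary: T)
  case Nil
  then show ?case by simp
next
  case (Cons x xs)
  show ?case
  proof (cases "x \<in> T")
    case True
    have "T - {x} \<subseteq> set xs"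
      using Cons.prems by auto
    then obtain ys where ys: "ys \<in> set (subsets (card (T - {x})) xs)" "set ys = T - {x}"
      using Cons.IH by blast
    have "card T = Suc (card (T - {x}))"
      using finite_subset[OF Cons.prems finite_set] True by (rule card_Suc_Diff1[symmetric])
    then have "x # ys \<in> set (subsets (card T) (x # xs))"
      using ys(1) by simp
    moreover have "set (x # ys) = T"
      using ys(2) True by auto
    ultimately show ?thesis by blast
  next
    case False
    then have "T \<subseteq> set xs"
      using Cons.prems by auto
    then obtain ys where "ys \<in> set (subsets (card T) xs)" "set ys = T"
      using Cons.IH by blast
    with subsets_Cons_mono[of "card T" xs x] show ?thesis
      by blast
  qed
qed

fun all_suffixes :: "('a \<Rightarrow> 'a list \<Rightarrow> bool) \<Rightarrow> 'a list \<Rightarrow> bool" where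
  "all_suffixes P [] = True"
| "all_suffixes P (x # xs) = (P x xs \<and> all_suffixes P xs)"

lemma list_all_subsets_Suc:
  "list_all P (subsets (Suc k) xs) = all_suffixes (\<lambda>x r. list_all (\<lambda>ys. P (x # ys)) (subsets k r)) xs"
  by (induction xs) (auto simp: list_all_iff)

fun orient :: "quad \<Rightarrow> quad" where
  "orient (i, j, k, l) = (if i < k then (i, j, k, l) else (k, l, i, j))"

fun relabel_quad :: "(nat \<Rightarrow> nat) \<Rightarrow> (nat \<Rightarrow> nat) \<Rightarrow> quad \<Rightarrow> quad" where
  "relabel_quad \<pi> \<sigma> (i, j, k, l) = orient (\<pi> i, \<sigma> j, \<pi> k, \<sigma> l)"

definition b4_quads :: "quad list" where
  "b4_quads = [(1, 1, 2, 3), (2, 1, 3, 3), (1, 2, 3, 1), (1, 3, 3, 2)]"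

text \<open>
  Reversing both rows and columns fixes \<open>B\<^sub>4\<close>, so row permutations up to this reversal suffice.
\<close>

definition b4_relabellings :: "((nat \<Rightarrow> nat) \<times> (nat \<Rightarrow> nat)) list" where
  "b4_relabellings = List.product
     [id, Transposition.transpose 2 3, Transposition.transpose 1 2]
     [id, Transposition.transpose 1 2, Transposition.transpose 1 3, Transposition.transpose 2 3,
      Transposition.transpose 1 2 \<circ> Transposition.transpose 2 3,
      Transposition.transpose 2 3 \<circ> Transposition.transpose 1 2]"

lemma list_all_subsets_4:
  "list_all P (subsets 4 xs) =
     all_suffixes (\<lambda>x1 r1. all_suffixes (\<lambda>x2 r2. all_suffixes (\<lambda>x3 r3.
       all_suffixes (\<lambda>x4 r4. P [x1, x2, x3, x4]) r3) r2) r1) xs"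
  by (simp add: numeral_eq_Suc list_all_subsets_Suc)

lemma balanced_quadruple_cases:
  assumes "ys \<in> set (subsets 4 (diag_quads 3 3))" "(\<Sum>q\<leftarrow>ys. incidence_code q) = 0"
  shows "(\<forall>q \<in> set ys. transpose_quad q \<in> set ys) \<or>
         (\<exists>(\<pi>, \<sigma>) \<in> set b4_relabellings. \<forall>q \<in> set b4_quads. relabel_quad \<pi> \<sigma> q \<in> set ys)"
proof -
  txt \<open>
    Pairing each quadruple with its code makes the simplifier compute every code once; the
    nested conditionals keep it from evaluating the later tests on quadruples already decided.
  \<close>
  have computed: "list_all (\<lambda>zs. if sum_list (map snd zs) = 0 then
      if list_all (\<lambda>q. transpose_quad q \<in> set (map fst zs)) (map fst zs) then True
      else \<exists>(\<pi>, \<sigma>) \<in> set b4_relabellings.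
        list_all (\<lambda>q. q \<in> set (map fst zs)) (map (relabel_quad \<pi> \<sigma>) b4_quads)
    else True) (subsets 4 (map (\<lambda>q. (q, incidence_code q)) (diag_quads 3 3)))"
    unfolding list_all_subsets_4
    by (simp add: upt_rec diag_quads_def incidence_code_def grid_list_def signed_incidence_def
        b4_relabellings_def b4_quads_def transpose_def)
  have "\<forall>zs \<in> set (subsets 4 (diag_quads 3 3)). if (\<Sum>q\<leftarrow>zs. incidence_code q) = 0 then
      if list_all (\<lambda>q. transpose_quad q \<in> set zs) zs then True
      else \<exists>(\<pi>, \<sigma>) \<in> set b4_relabellings.
        list_all (\<lambda>q. q \<in> set zs) (map (relabel_quad \<pi> \<sigma>) b4_quads)
    else True"
    using computed[unfolded subsets_map list.pred_map, unfolded comp_def map_map fst_conv snd_conv map_ident]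
    by (simp add: list_all_iff cong: if_cong)
  from bspec[OF this assms(1)] assms(2) show ?thesis
    by (simp add: list_all_iff split: if_splits)
qed

lemma degree_criterion_criss_cross_Un:
  "is_criss_cross C \<Longrightarrow> is_criss_cross D \<Longrightarrow> degree_criterion a b (C \<union> D)"
  by (auto simp: is_criss_cross_def degree_criterion_def partial_transpose_Un)

lemma degree_criterion_locally_isomorphic:
  assumes "locally_isomorphic a b G H" "\<forall>e \<in> G \<union> H. \<exists>u v. e = {u, v}"
  shows "degree_criterion a b G \<longleftrightarrow> degree_criterion a b H"
proof -
  obtain \<pi> \<sigma> where "\<pi> permutes {1..a}" "\<sigma> permutes {1..b}" "H = relabel \<pi> \<sigma> G"
    using assms by (rule relabel_if_locally_isomorphic)
  then show ?thesis
    by (simp add: degree_criterion_relabel)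
qed

lemma b4_relabellings_permute:
  "(\<pi>, \<sigma>) \<in> set b4_relabellings \<Longrightarrow> \<pi> permutes {1..3} \<and> \<sigma> permutes {1..3}"
  unfolding b4_relabellings_def by (auto intro!: permutes_swap_id permutes_compose)

lemma edge_orient [simp]: "edge (orient q) = edge q"
  by (cases q) (auto simp: insert_commute)

lemma edge_relabel_quad: "edge (relabel_quad \<pi> \<sigma> q) = image (map_prod \<pi> \<sigma>) (edge q)"
  by (cases q) (simp del: orient.simps)

lemma cross_hatch_B4_eq: "cross_hatch_B4 = edge ` set b4_quads"
  by (simp add: cross_hatch_B4_def b4_quads_def)

lemma card_cross_hatch_B4: "card cross_hatch_B4 = 4"
  by (simp add: cross_hatch_B4_def doubleton_eq_iff)

lemma locally_isomorphic_B4_if_relabelled_subset: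
  assumes T: "T \<subseteq> set (diag_quads 3 3)" "card T = 4"
    and relabelling: "(\<pi>, \<sigma>) \<in> set b4_relabellings"
    and sub: "\<forall>q \<in> set b4_quads. relabel_quad \<pi> \<sigma> q \<in> T"
  shows "locally_isomorphic 3 3 (edge ` T) cross_hatch_B4"
proof -
  have perm: "\<pi> permutes {1..3}" "\<sigma> permutes {1..3}"
    using b4_relabellings_permute[OF relabelling] by auto
  have "card (relabel \<pi> \<sigma> cross_hatch_B4) = 4"
    unfolding relabel_def card_cross_hatch_B4[symmetric]
    by (rule card_image, rule inj_on_subset[OF inj_image_map_prod subset_UNIV])
      (simp_all add: permutes_inj[OF perm(1)] permutes_inj[OF perm(2)])
  moreover have "card (edge ` T) = 4"
    using T by (simp add: card_image inj_on_subset[OF inj_on_edge_diag_quads])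
  moreover have "relabel \<pi> \<sigma> cross_hatch_B4 = edge ` relabel_quad \<pi> \<sigma> ` set b4_quads"
    by (simp add: relabel_def cross_hatch_B4_eq image_image edge_relabel_quad)
  then have "relabel \<pi> \<sigma> cross_hatch_B4 \<subseteq> edge ` T"
    using sub by blast
  ultimately have "edge ` T = relabel \<pi> \<sigma> cross_hatch_B4"
    using card_subset_eq[OF finite_imageI[OF finite_subset[OF T(1) finite_set]]] by metis
  then have "cross_hatch_B4 = relabel (inv \<pi>) (inv \<sigma>) (edge ` T)"
    using perm by (simp add: relabel_inv permutes_bij)
  moreover have "locally_isomorphic 3 3 (edge ` T) (relabel (inv \<pi>) (inv \<sigma>) (edge ` T))"
    using perm by (intro locally_isomorphic_relabel permutes_inv)
  ultimately show ?thesis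
    by simp
qed

lemma card4_involution_orbits:
  assumes "card T = 4" "\<forall>x \<in> T. f x \<in> T \<and> f x \<noteq> x \<and> f (f x) = x"
  obtains c d where "c \<in> T" "d \<in> T" "T = {c, f c} \<union> {d, f d}" "{c, f c} \<inter> {d, f d} = {}"
proof -
  have fin: "finite T"
    using assms(1) by (simp add: card_ge_0_finite)
  have "T \<noteq> {}"
    using assms(1) by auto
  then obtain c where c: "c \<in> T"
    by blast
  define R where "R = T - {c, f c}"
  have "card {c, f c} = 2" "{c, f c} \<subseteq> T"
    using assms(2) c by auto
  then have "card R = 2"
    unfolding R_def using assms(1) by (simp add: card_Diff_subset)
  then have "R \<noteq> {}"
    by auto
  then obtain d where d: "d \<in> R"
    by blast
  have d': "d \<in> T" "d \<noteq> c" "d \<noteq> f c"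
    using d unfolding R_def by auto
  have fd: "f d \<in> T" "f d \<noteq> d" "f (f d) = d" and fc: "f (f c) = c"
    using assms(2) c d'(1) by auto
  have "f d \<noteq> c" "f d \<noteq> f c"
    using d'(2,3) fd(3) fc by auto
  then have sub: "{d, f d} \<subseteq> R" and card2: "card {d, f d} = 2"
    using d fd(1,2) unfolding R_def by auto
  have "finite R"
    using fin unfolding R_def by simp
  then have "R = {d, f d}"
    using card_subset_eq[OF _ sub] \<open>card R = 2\<close> card2 by simp
  moreover have "T = {c, f c} \<union> R" "{c, f c} \<inter> R = {}"
    using \<open>{c, f c} \<subseteq> T\<close> unfolding R_def by blast+
  ultimately show ?thesis
    using that[of c d] c d'(1) by simp
qed

lemma is_criss_cross_edge_transpose:
  assumes "q \<in> set (diag_quads a b)"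
  shows "is_criss_cross (edge ` {q, transpose_quad q})"
proof (cases q rule: prod_cases4)
  case (fields i j k l)
  with assms have "i \<noteq> k" "j \<noteq> l"
    by (auto simp: mem_diag_quads)
  then have "is_criss_cross (criss_cross i j k l)"
    unfolding is_criss_cross_def by (intro exI[of _ i] exI[of _ j] exI[of _ k] exI[of _ l]) simp
  moreover have "edge ` {q, transpose_quad q} = criss_cross i j k l"
    by (simp add: fields criss_cross_def)
  ultimately show ?thesis
    by simp
qed

lemma two_criss_crosses_if_transpose_closed:
  assumes T: "T \<subseteq> set (diag_quads a b)" "card T = 4"
    and closed: "\<forall>q \<in> T. transpose_quad q \<in> T"
  shows "\<exists>C D. is_criss_cross C \<and> is_criss_cross D \<and> C \<inter> D = {} \<and> edge ` T = C \<union> D"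
proof -
  have "\<forall>q \<in> T. transpose_quad q \<in> T \<and> transpose_quad q \<noteq> q \<and> transpose_quad (transpose_quad q) = q"
  proof
    fix q assume "q \<in> T"
    moreover from this T(1) have "q \<in> set (diag_quads a b)"
      by blast
    ultimately show "transpose_quad q \<in> T \<and> transpose_quad q \<noteq> q \<and> transpose_quad (transpose_quad q) = q"
      using closed by (simp add: transpose_quad_neq)
  qed
  with T(2) obtain c d where cd: "c \<in> T" "d \<in> T" "T = {c, transpose_quad c} \<union> {d, transpose_quad d}"
      "{c, transpose_quad c} \<inter> {d, transpose_quad d} = {}"
    by (rule card4_involution_orbits)
  let ?A = "{c, transpose_quad c}" and ?B = "{d, transpose_quad d}"
  have sub: "?A \<subseteq> T" "?B \<subseteq> T"
    by (subst cd(3), rule Un_upper1) (subst cd(3), rule Un_upper2)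
  show ?thesis
  proof (intro exI conjI)
    show "is_criss_cross (edge ` ?A)" "is_criss_cross (edge ` ?B)"
      using cd(1,2) T(1) by (blast intro: is_criss_cross_edge_transpose)+
    show "edge ` ?A \<inter> edge ` ?B = {}"
      using inj_on_image_Int[OF inj_on_subset[OF inj_on_edge_diag_quads T(1)] sub] cd(4) by simp
    show "edge ` T = edge ` ?A \<union> edge ` ?B"
      by (subst cd(3)) (rule image_Un)
  qed
qed

lemma classification_of_balanced_quadruples:
  assumes T: "T \<subseteq> set (diag_quads 3 3)" "card T = 4" and criterion: "degree_criterion 3 3 (edge ` T)"
  shows "locally_isomorphic 3 3 (edge ` T) cross_hatch_B4 \<or>
         (\<exists>C D. is_criss_cross C \<and> is_criss_cross D \<and> C \<inter> D = {} \<and> edge ` T = C \<union> D)"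
proof -
  obtain ys where ys: "ys \<in> set (subsets 4 (diag_quads 3 3))" "set ys = T"
    using subsets_exhaust[OF T(1)] T(2) by auto
  then have "distinct ys"
    using T(2) by (simp add: card_distinct length_subsets)
  with ys T criterion have "(\<Sum>q\<leftarrow>ys. incidence_code q) = 0"
    using degree_criterion_iff_incidence_code_sum[of ys] by (simp add: length_subsets)
  then consider "\<forall>q \<in> T. transpose_quad q \<in> T"
    | \<pi> \<sigma> where "(\<pi>, \<sigma>) \<in> set b4_relabellings" "\<forall>q \<in> set b4_quads. relabel_quad \<pi> \<sigma> q \<in> T"
    using balanced_quadruple_cases[OF ys(1)] ys(2) by blast
  then show ?thesis
    using T two_criss_crosses_if_transpose_closed locally_isomorphic_B4_if_relabelled_subset by metis
qed

theorem mainTheorem13: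
  fixes E :: edges
  assumes "grid_graph 3 3 E"
    and "card E = 4"
    and "\<forall>e \<in> E. diagonal e"
  shows "degree_criterion 3 3 E \<longleftrightarrow>
           (locally_isomorphic 3 3 E cross_hatch_B4 \<or>
            (\<exists>C D. is_criss_cross C \<and> is_criss_cross D \<and> C \<inter> D = {} \<and> E = C \<union> D))"
proof -
  obtain T where T: "T \<subseteq> set (diag_quads 3 3)" "E = edge ` T"
    using diagonal_edges_subset[OF assms(1,3)] by (rule subset_imageE)
  have "card T = 4"
    using assms(2) T by (simp add: card_image inj_on_subset[OF inj_on_edge_diag_quads])
  have doubletons: "\<forall>e \<in> E \<union> cross_hatch_B4. \<exists>u v. e = {u, v}"
    using assms(1) unfolding grid_graph_def cross_hatch_B4_def by blast
  show ?thesis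
  proof
    assume "degree_criterion 3 3 E"
    with T \<open>card T = 4\<close> show "locally_isomorphic 3 3 E cross_hatch_B4 \<or>
        (\<exists>C D. is_criss_cross C \<and> is_criss_cross D \<and> C \<inter> D = {} \<and> E = C \<union> D)"
      using classification_of_balanced_quadruples by blast
  next
    assume "locally_isomorphic 3 3 E cross_hatch_B4 \<or>
        (\<exists>C D. is_criss_cross C \<and> is_criss_cross D \<and> C \<inter> D = {} \<and> E = C \<union> D)"
    then show "degree_criterion 3 3 E"
      using degree_criterion_locally_isomorphic[OF _ doubletons] degree_criterion_cross_hatch_B4
        degree_criterion_criss_cross_Un by blast
  qed
qed

end
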